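(* Let $G$ be a finite connected graph with maximal vertex degree $d$ and diameter $D$. For any sign $\sigma$ on $G$ such that $(G,\sigma)$ satisfies $CD^{\sigma}(K,\infty)$, we have \[ (D+1)\left\lceil\frac{D+1}{2}\right\rceil\geq\frac{1}{4d(2\lambda^{\sigma}-K)}, \] where $\lambda^\sigma$ is the first (smallest) nonzero eigenvalue of $\Delta^\sigma$. If $\lambda^\sigma$ is not simple or $(G,\sigma)$ is balanced, then moreover \[ D\left\lceil\frac{D}{2}\right\rceil\geq\frac{1}{4d(2\lambda^{\sigma}-K)}. \]
   Context: $G=(V,E)$ is a finite simple connected graph with degrees $d_x$; a sign is $\sigma:E\to\{\pm1\}$, $\sigma_{xy}=\sigma(\{x,y\})$; $(G,\sigma)$ is balanced if every cycle has sign product $+1$. Signed Laplacian $\Delta^{\sigma}f(x)=\frac{1}{d_x}\sum_{y\sim x}(\sigma_{xy}f(y)-f(x))$; $\Delta$ is the case $\sigma\equiv+1$; eigenvalues: $-\Delta^\sigma f=\lambda f$, $f\neq 0$. $\Gamma^{\sigma}(f,g)=\frac12\{\Delta(fg)-g\Delta^{\sigma}f-f\Delta^{\sigma}g\}$, $\Gamma_2^{\sigma}(f,g)=\frac12\{\Delta\Gamma^{\sigma}(f,g)-\Gamma^{\sigma}(g,\Delta^{\sigma}f)-\Gamma^{\sigma}(f,\Delta^{\sigma}g)\}$. $CD^{\sigma}(K,\infty)$ means $\Gamma_2^{\sigma}(f,f)(x)\ge K\Gamma^\sigma(f,f)(x)$ for all $f:V\to\mathbb{R}$, $x\in V$. $\lceil\cdot\rceil$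 is the ceiling. *)

theory Defs
  imports Complex_Main
begin

definition simple_graph :: "'a set \<Rightarrow> ('a \<Rightarrow> 'a \<Rightarrow> bool) \<Rightarrow> bool" where
  "simple_graph V E \<longleftrightarrow> finite V \<and> (\<forall>x y. E x y \<longrightarrow> x \<in> V \<and> y \<in> V \<and> E y x \<and> x \<noteq> y)"

definition nbrs :: "'a set \<Rightarrow> ('a \<Rightarrow> 'a \<Rightarrow> bool) \<Rightarrow> 'a \<Rightarrow> 'a set" where
  "nbrs V E x = {y \<in> V. E x y}"

definition deg :: "'a set \<Rightarrow> ('a \<Rightarrow> 'a \<Rightarrow> bool) \<Rightarrow> 'a \<Rightarrow> nat" where
  "deg V E x = card (nbrs V E x)"

definition max_deg :: "'a set \<Rightarrow> ('a \<Rightarrow> 'a \<Rightarrow> bool) \<Rightarrow> nat" where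
  "max_deg V E = Max (deg V E ` V)"

definition walk :: "'a set \<Rightarrow> ('a \<Rightarrow> 'a \<Rightarrow> bool) \<Rightarrow> 'a list \<Rightarrow> bool" where
  "walk V E xs \<longleftrightarrow> xs \<noteq> [] \<and> set xs \<subseteq> V \<and>
     (\<forall>i. Suc i < length xs \<longrightarrow> E (xs ! i) (xs ! Suc i))"

definition connected_graph :: "'a set \<Rightarrow> ('a \<Rightarrow> 'a \<Rightarrow> bool) \<Rightarrow> bool" where
  "connected_graph V E \<longleftrightarrow>
     (\<forall>x\<in>V. \<forall>y\<in>V. \<exists>xs. walk V E xs \<and> hd xs = x \<and> last xs = y)"

definition gdist :: "'a set \<Rightarrow> ('a \<Rightarrow> 'a \<Rightarrow> bool) \<Rightarrow> 'a \<Rightarrow> 'a \<Rightarrow> nat" where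
  "gdist V E x y = (LEAST n. \<exists>xs. walk V E xs \<and> hd xs = x \<and> last xs = y \<and> length xs = Suc n)"

definition diameter :: "'a set \<Rightarrow> ('a \<Rightarrow> 'a \<Rightarrow> bool) \<Rightarrow> nat" where
  "diameter V E = Max {gdist V E x y | x y. x \<in> V \<and> y \<in> V}"

definition is_sign :: "('a \<Rightarrow> 'a \<Rightarrow> bool) \<Rightarrow> ('a \<Rightarrow> 'a \<Rightarrow> real) \<Rightarrow> bool" where
  "is_sign E \<sigma> \<longleftrightarrow> (\<forall>x y. E x y \<longrightarrow> (\<sigma> x y = 1 \<or> \<sigma> x y = -1) \<and> \<sigma> x y = \<sigma> y x)"

definition is_cycle :: "'a set \<Rightarrow> ('a \<Rightarrow> 'a \<Rightarrow> bool) \<Rightarrow> 'a list \<Rightarrow> bool" where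
  "is_cycle V E cs \<longleftrightarrow> length cs \<ge> 3 \<and> distinct cs \<and> walk V E cs \<and> E (last cs) (hd cs)"

definition cycle_sign :: "('a \<Rightarrow> 'a \<Rightarrow> real) \<Rightarrow> 'a list \<Rightarrow> real" where
  "cycle_sign \<sigma> cs = (\<Prod>i<length cs. \<sigma> (cs ! i) (cs ! ((Suc i) mod length cs)))"

definition balanced :: "'a set \<Rightarrow> ('a \<Rightarrow> 'a \<Rightarrow> bool) \<Rightarrow> ('a \<Rightarrow> 'a \<Rightarrow> real) \<Rightarrow> bool" where
  "balanced V E \<sigma> \<longleftrightarrow> (\<forall>cs. is_cycle V E cs \<longrightarrow> cycle_sign \<sigma> cs = 1)"

definition slap :: "'a set \<Rightarrow> ('a \<Rightarrow> 'a \<Rightarrow> bool) \<Rightarrow> ('a \<Rightarrow> 'a \<Rightarrow> real) \<Rightarrow> ('a \<Rightarrow> real) \<Rightarrow> 'a \<Rightarrow> real" where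
  "slap V E \<sigma> f x = (1 / real (deg V E x)) * (\<Sum>y\<in>nbrs V E x. \<sigma> x y * f y - f x)"

definition lap :: "'a set \<Rightarrow> ('a \<Rightarrow> 'a \<Rightarrow> bool) \<Rightarrow> ('a \<Rightarrow> real) \<Rightarrow> 'a \<Rightarrow> real" where
  "lap V E f = slap V E (\<lambda>_ _. 1) f"

definition sGamma :: "'a set \<Rightarrow> ('a \<Rightarrow> 'a \<Rightarrow> bool) \<Rightarrow> ('a \<Rightarrow> 'a \<Rightarrow> real) \<Rightarrow> ('a \<Rightarrow> real) \<Rightarrow> ('a \<Rightarrow> real) \<Rightarrow> 'a \<Rightarrow> real" where
  "sGamma V E \<sigma> f g x = (1/2) * (lap V E (\<lambda>z. f z * g z) x - g x * slap V E \<sigma> f x - f x * slap V E \<sigma> g x)"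

definition sGamma2 :: "'a set \<Rightarrow> ('a \<Rightarrow> 'a \<Rightarrow> bool) \<Rightarrow> ('a \<Rightarrow> 'a \<Rightarrow> real) \<Rightarrow> ('a \<Rightarrow> real) \<Rightarrow> ('a \<Rightarrow> real) \<Rightarrow> 'a \<Rightarrow> real" where
  "sGamma2 V E \<sigma> f g x = (1/2) * (lap V E (sGamma V E \<sigma> f g) x
      - sGamma V E \<sigma> g (slap V E \<sigma> f) x - sGamma V E \<sigma> f (slap V E \<sigma> g) x)"

definition CD_inf :: "'a set \<Rightarrow> ('a \<Rightarrow> 'a \<Rightarrow> bool) \<Rightarrow> ('a \<Rightarrow> 'a \<Rightarrow> real) \<Rightarrow> real \<Rightarrow> bool" where
  "CD_inf V E \<sigma> K \<longleftrightarrow> (\<forall>f x. x \<in> V \<longrightarrow> sGamma2 V E \<sigma> f f x \<ge> K * sGamma V E \<sigma> f f x)"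

definition eigenfun :: "'a set \<Rightarrow> ('a \<Rightarrow> 'a \<Rightarrow> bool) \<Rightarrow> ('a \<Rightarrow> 'a \<Rightarrow> real) \<Rightarrow> real \<Rightarrow> ('a \<Rightarrow> real) \<Rightarrow> bool" where
  "eigenfun V E \<sigma> lam f \<longleftrightarrow> (\<exists>x\<in>V. f x \<noteq> 0) \<and> (\<forall>x\<in>V. - slap V E \<sigma> f x = lam * f x)"

definition eigenvalue :: "'a set \<Rightarrow> ('a \<Rightarrow> 'a \<Rightarrow> bool) \<Rightarrow> ('a \<Rightarrow> 'a \<Rightarrow> real) \<Rightarrow> real \<Rightarrow> bool" where
  "eigenvalue V E \<sigma> lam \<longleftrightarrow> (\<exists>f. eigenfun V E \<sigma> lam f)"

definition simple_eigenvalue :: "'a set \<Rightarrow> ('a \<Rightarrow> 'a \<Rightarrow> bool) \<Rightarrow> ('a \<Rightarrow> 'a \<Rightarrow> real) \<Rightarrow> real \<Rightarrow> bool" where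
  "simple_eigenvalue V E \<sigma> lam \<longleftrightarrow> eigenvalue V E \<sigma> lam \<and>
     (\<forall>f g. eigenfun V E \<sigma> lam f \<longrightarrow> eigenfun V E \<sigma> lam g \<longrightarrow> (\<exists>c. \<forall>x\<in>V. f x = c * g x))"

end

theory Submission
  imports Defs "HOL-Analysis.Convex"
begin

(* Normalize an eigenfunction g so that max |g| = g(x0) = 1. At a maximum point of
   Gamma(g) + (2 lam - K) g^2 the curvature condition CD(K, inf) and the eigen-equation give
   Gamma(g) <= 2 (2 lam - K) everywhere, i.e. sum_{y ~ x} (sigma_xy g(y) - g(x))^2 <= 4 d (2 lam - K).
   Along a non-backtracking walk from x0, switch g by the sign of the walk so far: consecutive
   pairs of increments meet at a common vertex with two distinct neighbours, so they share one
   such bound, and if the switched values drop from 1 to <= 0 within L steps, Cauchy-Schwarz gives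
   1 <= L ceil(L/2) 4 d (2 lam - K). Since lam > 0 some edge xy has sigma_xy g(x) g(y) <= 0; a
   shortest path to it, possibly extended by that edge, is such a walk with L <= D + 1. If sigma is
   balanced the switching sign does not depend on the path, and one of the two shortest paths to
   the ends of the edge works with L <= D; if lam is not simple, some eigenfunction vanishes at a
   vertex, and a shortest path from its peak to that vertex works. *)

section \<open>Walks\<close>

lemma walk_singleton [simp]: "walk V E [a] \<longleftrightarrow> a \<in> V"
  by (auto simp: walk_def)

lemma walk_Cons_Cons [simp]:
  "walk V E (a # b # r) \<longleftrightarrow> a \<in> V \<and> E a b \<and> walk V E (b # r)"
proof -
  have "(\<forall>i. Suc i < length (a # b # r) \<longrightarrow> E ((a # b # r) ! i) ((a # b # r) ! Suc i)) \<longleftrightarrow>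
        E a b \<and> (\<forall>i. Suc i < length (b # r) \<longrightarrow> E ((b # r) ! i) ((b # r) ! Suc i))"
    by (metis (no_types, opaque_lifting) Suc_less_eq length_Cons nth_Cons_0 nth_Cons_Suc
        zero_less_Suc not0_implies_Suc)
  then show ?thesis unfolding walk_def by auto
qed

lemma walk_not_Nil: "walk V E xs \<Longrightarrow> xs \<noteq> []"
  by (simp add: walk_def)

lemma walk_Cons_hd_in: "walk V E (u # ys) \<Longrightarrow> u \<in> V"
  by (simp add: walk_def)

lemma walk_append_iff:
  "walk V E (xs @ u # ys) \<longleftrightarrow> walk V E (xs @ [u]) \<and> walk V E (u # ys)"
  by (induction xs rule: induct_list012) (auto dest: walk_Cons_hd_in)

lemma walk_appendD1:
  assumes "walk V E (xs @ ys)" "xs \<noteq> []"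
  shows "walk V E xs"
proof -
  obtain zs x where "xs = zs @ [x]" using assms(2) by (cases xs rule: rev_cases) auto
  then show ?thesis using assms(1) walk_append_iff[of V E zs x ys] by simp
qed

lemma walk_appendD2:
  assumes "walk V E (xs @ ys)" "ys \<noteq> []"
  shows "walk V E ys"
proof -
  obtain y zs where "ys = y # zs" using assms(2) by (cases ys) auto
  then show ?thesis using assms(1) walk_append_iff[of V E xs y zs] by simp
qed

lemma walk_take: "walk V E xs \<Longrightarrow> walk V E (take (Suc k) xs)"
  using walk_appendD1[of V E "take (Suc k) xs" "drop (Suc k) xs"] walk_not_Nil[of V E xs] by simp

lemma walk_snoc:
  assumes "walk V E xs" "E (last xs) y" "y \<in> V"
  shows "walk V E (xs @ [y])"
proof -
  obtain zs x where xs: "xs = zs @ [x]"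
    using walk_not_Nil[OF assms(1)] by (cases xs rule: rev_cases) auto
  then have "x \<in> V" using assms(1) by (auto simp: walk_def)
  then show ?thesis using assms walk_append_iff[of V E zs x "[y]"] by (simp add: xs)
qed

lemma walk_rev: "simple_graph V E \<Longrightarrow> walk V E xs \<Longrightarrow> walk V E (rev xs)"
proof (induction xs rule: induct_list012)
  case (3 a b r)
  then show ?case
    using walk_append_iff[of V E "rev r" b "[a]"] by (auto simp: simple_graph_def)
qed auto

fun walk_sign :: "('a \<Rightarrow> 'a \<Rightarrow> real) \<Rightarrow> 'a list \<Rightarrow> real" where
  "walk_sign \<sigma> (x # y # ys) = \<sigma> x y * walk_sign \<sigma> (y # ys)"
| "walk_sign \<sigma> _ = 1"

lemma walk_sign_append:
  "walk_sign \<sigma> (xs @ u # ys) = walk_sign \<sigma> (xs @ [u]) * walk_sign \<sigma> (u # ys)"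
  by (induction xs rule: induct_list012) auto

lemma walk_sign_snoc: "walk_sign \<sigma> (xs @ [a, b]) = walk_sign \<sigma> (xs @ [a]) * \<sigma> a b"
  using walk_sign_append[of \<sigma> xs a "[b]"] by simp

lemma walk_sign_snoc_last:
  "xs \<noteq> [] \<Longrightarrow> walk_sign \<sigma> (xs @ [y]) = walk_sign \<sigma> xs * \<sigma> (last xs) y"
  by (induction xs rule: rev_induct) (auto simp: walk_sign_snoc)

lemma walk_sign_conv_prod: "walk_sign \<sigma> xs = (\<Prod>i<length xs - 1. \<sigma> (xs ! i) (xs ! Suc i))"
proof (induction xs rule: induct_list012)
  case (3 a b r)
  then show ?case
    by (simp add: prod.lessThan_Suc_shift del: prod.lessThan_Suc)
qed auto

lemma cycle_sign_eq_walk_sign: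
  assumes "cs \<noteq> []"
  shows "cycle_sign \<sigma> cs = walk_sign \<sigma> (cs @ [hd cs])"
proof -
  let ?n = "length cs"
  have "walk_sign \<sigma> (cs @ [hd cs]) = (\<Prod>i<?n. \<sigma> ((cs @ [hd cs]) ! i) ((cs @ [hd cs]) ! Suc i))"
    by (simp add: walk_sign_conv_prod)
  also have "\<dots> = (\<Prod>i<?n. \<sigma> (cs ! i) (cs ! (Suc i mod ?n)))"
  proof (rule prod.cong)
    fix i assume "i \<in> {..<?n}"
    then consider "Suc i < ?n" | "Suc i = ?n" by fastforce
    then show "\<sigma> ((cs @ [hd cs]) ! i) ((cs @ [hd cs]) ! Suc i) = \<sigma> (cs ! i) (cs ! (Suc i mod ?n))"
      by cases (use assms in \<open>simp_all add: nth_append hd_conv_nth\<close>)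
  qed simp
  finally show ?thesis by (simp add: cycle_sign_def)
qed

section \<open>Distances and non-backtracking walks\<close>

definition non_backtracking :: "'a list \<Rightarrow> bool" where
  "non_backtracking W \<longleftrightarrow> (\<forall>i. i + 2 < length W \<longrightarrow> W ! i \<noteq> W ! (i + 2))"

lemma gdist_le_length:
  assumes "walk V E W" "hd W = x" "last W = y"
  shows "gdist V E x y \<le> length W - 1"
  unfolding gdist_def
  by (rule Least_le) (use assms walk_not_Nil[OF assms(1)] in \<open>auto intro!: exI[of _ W]\<close>)

lemma gdist_le_nth:
  assumes "walk V E W" "i < length W"
  shows "gdist V E (hd W) (W ! i) \<le> i"
proof -
  have "walk V E (take (Suc i) W)" using assms(1) by (rule walk_take)
  moreover have "hd (take (Suc i) W) = hd W"
    using walk_not_Nil[OF assms(1)] by (cases W) simp_all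
  moreover have "last (take (Suc i) W) = W ! i"
    using assms(2) by (simp add: take_Suc_conv_app_nth)
  ultimately show ?thesis using gdist_le_length assms(2) by fastforce
qed

lemma shortest_walk_exists:
  assumes "connected_graph V E" "x \<in> V" "y \<in> V"
  obtains W where "walk V E W" "hd W = x" "last W = y" "length W = Suc (gdist V E x y)"
proof -
  obtain W where W: "walk V E W" "hd W = x" "last W = y"
    using assms unfolding connected_graph_def by blast
  then have "\<exists>n W. walk V E W \<and> hd W = x \<and> last W = y \<and> length W = Suc n"
    using walk_not_Nil[OF W(1)] by (intro exI[of _ "length W - 1"] exI[of _ W]) auto
  from LeastI_ex[OF this] show ?thesis using that unfolding gdist_def by blast
qed

lemma shortest_walk_non_backtracking:
  assumes w: "walk V E W" and shortest: "length W = Suc (gdist V E (hd W) (last W))"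
  shows "non_backtracking W"
  unfolding non_backtracking_def
proof (intro allI impI notI)
  fix i assume i: "i + 2 < length W" and returns: "W ! i = W ! (i + 2)"
  define xs u v B where "xs = take i W" and "u = W ! i" and "v = W ! Suc i"
    and "B = drop (Suc (Suc (Suc i))) W"
  have drop_Suc: "\<And>k. k < length W \<Longrightarrow> drop k W = W ! k # drop (Suc k) W"
    by (simp add: Cons_nth_drop_Suc)
  have "drop i W = u # v # u # B"
    using i returns by (simp add: drop_Suc u_def v_def B_def)
  then have W: "W = xs @ u # v # u # B"
    by (metis append_take_drop_id xs_def)
  then have "walk V E (xs @ u # B)"
    using w walk_append_iff[of V E xs u B] walk_append_iff[of V E xs u "v # u # B"] by simp
  moreover have "hd (xs @ u # B) = hd W" "last (xs @ u # B) = last W"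
    by (simp_all add: W hd_append)
  ultimately have "gdist V E (hd W) (last W) \<le> length W - 3"
    using gdist_le_length by (fastforce simp: W)
  then show False using shortest i by simp
qed

lemma non_backtracking_snoc:
  assumes "non_backtracking W" and "2 \<le> length W \<Longrightarrow> y \<noteq> W ! (length W - 2)"
  shows "non_backtracking (W @ [y])"
  unfolding non_backtracking_def
proof (intro allI impI)
  fix i assume i: "i + 2 < length (W @ [y])"
  show "(W @ [y]) ! i \<noteq> (W @ [y]) ! (i + 2)"
  proof (cases "i + 2 < length W")
    case True
    then show ?thesis using assms(1) by (simp add: non_backtracking_def nth_append)
  next
    case False
    then have i2: "i + 2 = length W" using i by simp
    then have "length W - 2 = i" by simp
    then have "(W @ [y]) ! (i + 2) = y" "(W @ [y]) ! i = W ! (length W - 2)"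
      using i2 by (simp_all add: nth_append)
    then show ?thesis using assms(2) i2 by auto
  qed
qed

section \<open>The signed Laplacian\<close>

lemma slap_cong:
  assumes "x \<in> V" "\<And>y. y \<in> V \<Longrightarrow> h y = h' y"
  shows "slap V E \<sigma> h x = slap V E \<sigma> h' x"
  unfolding slap_def using assms by (auto intro!: sum.cong simp: nbrs_def)

lemma slap_linear:
  "slap V E \<sigma> (\<lambda>z. a * h z + b * k z) x = a * slap V E \<sigma> h x + b * slap V E \<sigma> k x"
proof -
  have "(\<Sum>y\<in>nbrs V E x. \<sigma> x y * (a * h y + b * k y) - (a * h x + b * k x))
      = a * (\<Sum>y\<in>nbrs V E x. \<sigma> x y * h y - h x) + b * (\<Sum>y\<in>nbrs V E x. \<sigma> x y * k y - k x)"
    by (simp add: sum_distrib_left sum.distrib[symmetric] algebra_simps)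
  then show ?thesis unfolding slap_def by (simp add: algebra_simps)
qed

lemma slap_scale: "slap V E \<sigma> (\<lambda>z. a * h z) x = a * slap V E \<sigma> h x"
  using slap_linear[of V E \<sigma> a h 0 h x] by simp

lemma sGamma2_eigenfun:
  assumes "x \<in> V" and eigen: "\<And>z. z \<in> V \<Longrightarrow> slap V E \<sigma> g z = - lam * g z"
  shows "sGamma2 V E \<sigma> g g x = lap V E (sGamma V E \<sigma> g g) x / 2 + lam * sGamma V E \<sigma> g g x"
proof -
  have "lap V E (\<lambda>z. g z * slap V E \<sigma> g z) x = lap V E (\<lambda>z. - lam * (g z * g z)) x"
    unfolding lap_def by (rule slap_cong) (simp_all add: assms)
  moreover have "slap V E \<sigma> (slap V E \<sigma> g) x = slap V E \<sigma> (\<lambda>z. - lam * g z) x"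
    by (rule slap_cong) (simp_all add: assms)
  ultimately have "sGamma V E \<sigma> g (slap V E \<sigma> g) x = - lam * sGamma V E \<sigma> g g x"
    unfolding sGamma_def lap_def slap_scale eigen[OF \<open>x \<in> V\<close>] by (simp add: algebra_simps)
  then show ?thesis unfolding sGamma2_def by (simp add: algebra_simps)
qed

lemma eigenfun_vanishing_if_not_simple:
  assumes "eigenvalue V E \<sigma> lam" "\<not> simple_eigenvalue V E \<sigma> lam"
  obtains f v where "eigenfun V E \<sigma> lam f" "v \<in> V" "f v = 0"
proof -
  obtain f1 f2 where f1: "eigenfun V E \<sigma> lam f1" and f2: "eigenfun V E \<sigma> lam f2"
    and independent: "\<not> (\<exists>c. \<forall>x\<in>V. f1 x = c * f2 x)"
    using assms unfolding simple_eigenvalue_def by blast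
  obtain v where v: "v \<in> V" "f2 v \<noteq> 0" using f2 by (auto simp: eigenfun_def)
  define c where "c = f1 v / f2 v"
  define f where "f x = 1 * f1 x + (- c) * f2 x" for x
  have "- slap V E \<sigma> f x = lam * f x" if "x \<in> V" for x
  proof -
    have "slap V E \<sigma> f1 x = - (lam * f1 x)" "slap V E \<sigma> f2 x = - (lam * f2 x)"
      using f1 f2 that unfolding eigenfun_def by (metis minus_minus)+
    then show ?thesis unfolding f_def slap_linear by (simp add: algebra_simps)
  qed
  moreover have "\<exists>x\<in>V. f x \<noteq> 0"
  proof (rule ccontr)
    assume "\<not> (\<exists>x\<in>V. f x \<noteq> 0)"
    then have "\<forall>x\<in>V. f1 x = c * f2 x" by (simp add: f_def)
    then show False using independent by blast
  qed
  moreover have "f v = 0" using v by (simp add: f_def c_def)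
  ultimately show ?thesis using that v(1) by (auto simp: eigenfun_def)
qed

definition local_energy ::
  "'a set \<Rightarrow> ('a \<Rightarrow> 'a \<Rightarrow> bool) \<Rightarrow> ('a \<Rightarrow> 'a \<Rightarrow> real) \<Rightarrow> ('a \<Rightarrow> real) \<Rightarrow> 'a \<Rightarrow> real" where
  "local_energy V E \<sigma> g x = (\<Sum>y\<in>nbrs V E x. (\<sigma> x y * g y - g x)\<^sup>2)"

section \<open>Sequences with bounded increments\<close>

lemma sum_sq_increments_le:
  fixes h :: "nat \<Rightarrow> real"
  assumes single: "\<And>i. i < n \<Longrightarrow> (h (Suc i) - h i)\<^sup>2 \<le> M"
    and pair: "\<And>k. 2 * k + 2 \<le> n \<Longrightarrow> (h (2*k+1) - h (2*k))\<^sup>2 + (h (2*k+2) - h (2*k+1))\<^sup>2 \<le> M"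
  shows "(\<Sum>i<n. (h (Suc i) - h i)\<^sup>2) \<le> real ((n + 1) div 2) * M"
proof -
  define d where "d i = (h (Suc i) - h i)\<^sup>2" for i
  have pairs: "(\<Sum>i<2*k. d i) \<le> real k * M" if "2 * k \<le> n" for k
    using that
  proof (induction k)
    case (Suc k)
    have "(\<Sum>i<2 * Suc k. d i) = (\<Sum>i<2*k. d i) + (d (2*k) + d (2*k+1))"
      by (simp add: numeral_2_eq_2)
    moreover have "d (2*k) + d (2*k+1) \<le> M"
      using pair[of k] Suc.prems by (simp add: d_def add.commute)
    ultimately show ?case using Suc by (simp add: algebra_simps)
  qed simp
  show ?thesis
  proof (cases "even n")
    case True
    then show ?thesis using pairs[of "n div 2"] by (simp add: d_def)
  next
    case False
    then obtain k where n: "n = 2 * k + 1" using oddE by blast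
    have "(\<Sum>i<n. d i) = (\<Sum>i<2*k. d i) + d (2*k)" by (simp add: n)
    moreover have "d (2*k) \<le> M" using single[of "2*k"] by (simp add: n d_def)
    ultimately show ?thesis using pairs[of k] by (simp add: n d_def algebra_simps)
  qed
qed

lemma paired_increments_drop_bound:
  fixes h :: "nat \<Rightarrow> real"
  assumes "h 0 = 1" "h n \<le> 0"
    and single: "\<And>i. i < n \<Longrightarrow> (h (Suc i) - h i)\<^sup>2 \<le> M"
    and pair: "\<And>k. 2 * k + 2 \<le> n \<Longrightarrow> (h (2*k+1) - h (2*k))\<^sup>2 + (h (2*k+2) - h (2*k+1))\<^sup>2 \<le> M"
  shows "1 \<le> real n * real ((n + 1) div 2) * M"
proof -
  have "1 \<le> h 0 - h n" using assms(1,2) by simp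
  then have "1 \<le> (h 0 - h n)\<^sup>2" by (rule one_le_power)
  also have "(h 0 - h n)\<^sup>2 = (h n - h 0)\<^sup>2" by (rule power2_commute)
  also have "h n - h 0 = (\<Sum>i<n. h (Suc i) - h i)" by (rule sum_lessThan_telescope[symmetric])
  also have "(\<Sum>i<n. h (Suc i) - h i)\<^sup>2 \<le> (\<Sum>i<n. (h (Suc i) - h i)\<^sup>2) * real n"
    using sum_squared_le_sum_of_squares[of "\<lambda>i. h (Suc i) - h i" "{..<n}"] by simp
  also have "\<dots> \<le> real ((n + 1) div 2) * M * real n"
    using sum_sq_increments_le[OF single pair] by (intro mult_right_mono) auto
  finally show ?thesis by (simp add: algebra_simps)
qed

lemma ceiling_half_nat: "real_of_int \<lceil>real n / 2\<rceil> = real ((n + 1) div 2)"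
proof (cases "even n")
  case True
  then show ?thesis by (auto elim: evenE)
next
  case False
  then obtain k where n: "n = 2 * k + 1" using oddE by blast
  have "real n / 2 = real k + 1 / 2" by (simp add: n)
  then have "\<lceil>real n / 2\<rceil> = int k + 1" by (simp add: ceiling_eq_iff)
  then show ?thesis by (simp add: n)
qed

section \<open>Signed graphs\<close>

locale signed_graph =
  fixes V :: "'a set" and E :: "'a \<Rightarrow> 'a \<Rightarrow> bool" and \<sigma> :: "'a \<Rightarrow> 'a \<Rightarrow> real"
  assumes graph: "simple_graph V E" and sign: "is_sign E \<sigma>"
begin

lemma finite_vertices: "finite V"
  using graph by (simp add: simple_graph_def)

lemma edge_sym: "E x y \<Longrightarrow> E y x"
  using graph by (simp add: simple_graph_def)

lemma edge_vertices: "E x y \<Longrightarrow> x \<in> V \<and> y \<in> V"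
  using graph by (simp add: simple_graph_def)

lemma no_loop: "\<not> E x x"
  using graph by (auto simp: simple_graph_def)

lemma finite_nbrs: "finite (nbrs V E x)"
  using finite_vertices by (simp add: nbrs_def)

lemma sign_sym: "E x y \<Longrightarrow> \<sigma> y x = \<sigma> x y"
  using sign by (metis is_sign_def)

lemma sign_cases: "E x y \<Longrightarrow> \<sigma> x y = 1 \<or> \<sigma> x y = -1"
  using sign by (simp add: is_sign_def)

lemma sign_square: "E x y \<Longrightarrow> \<sigma> x y * \<sigma> x y = 1"
  using sign_cases by fastforce

lemma gdist_le_diameter:
  assumes "x \<in> V" "y \<in> V"
  shows "gdist V E x y \<le> diameter V E"
proof -
  have "{gdist V E x y | x y. x \<in> V \<and> y \<in> V} = (\<lambda>(x, y). gdist V E x y) ` (V \<times> V)"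
    by auto
  then show ?thesis
    unfolding diameter_def using assms finite_vertices by (intro Max_ge) auto
qed

lemma walk_sign_square: "walk V E xs \<Longrightarrow> walk_sign \<sigma> xs * walk_sign \<sigma> xs = 1"
proof (induction xs rule: induct_list012)
  case (3 a b r)
  then have "(\<sigma> a b * \<sigma> a b) * (walk_sign \<sigma> (b # r) * walk_sign \<sigma> (b # r)) = 1"
    using sign_square by simp
  then show ?case by (simp add: algebra_simps)
qed auto

lemma walk_sign_rev: "walk V E xs \<Longrightarrow> walk_sign \<sigma> (rev xs) = walk_sign \<sigma> xs"
proof (induction xs rule: induct_list012)
  case (3 a b r)
  then have "walk_sign \<sigma> (rev r @ [b]) = walk_sign \<sigma> (b # r)" by simp
  then show ?case using 3 by (simp add: walk_sign_snoc sign_sym)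
qed auto

lemma walk_sign_closed_distinct:
  assumes bal: "balanced V E \<sigma>" and w: "walk V E (c @ [hd c])" and c: "distinct c" "c \<noteq> []"
  shows "walk_sign \<sigma> (c @ [hd c]) = 1"
proof (cases "length c \<ge> 3")
  case True
  have "c @ [hd c] = butlast c @ last c # [hd c]" using c(2) by simp
  then have "walk V E (butlast c @ last c # [hd c])" using w by (simp only:)
  then have "walk V E [last c, hd c]"
    using walk_append_iff[of V E "butlast c" "last c" "[hd c]"] by blast
  then have "E (last c) (hd c)" by simp
  moreover have "walk V E c" using w c walk_appendD1 by blast
  ultimately have "is_cycle V E c" using True c by (simp add: is_cycle_def)
  then have "cycle_sign \<sigma> c = 1" using bal by (simp add: balanced_def)
  then show ?thesis using cycle_sign_eq_walk_sign[OF c(2)] by simp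
next
  case False
  moreover have "length c \<noteq> 0" using c(2) by simp
  ultimately have "length c = Suc 0 \<or> length c = Suc (Suc 0)" by arith
  then consider a where "c = [a]" | a b where "c = [a, b]"
    by (auto simp: length_Suc_conv)
  then show ?thesis
  proof cases
    case 1
    then show ?thesis using w no_loop by simp
  next
    case (2 a b)
    then show ?thesis using w sign_sym[of a b] sign_square[of a b] by simp
  qed
qed

lemma walk_sign_closed:
  assumes bal: "balanced V E \<sigma>"
  shows "walk V E W \<Longrightarrow> hd W = last W \<Longrightarrow> walk_sign \<sigma> W = 1"
proof (induction "length W" arbitrary: W rule: less_induct)
  case less
  show ?case
  proof (cases "length W = 1")
    case True
    then show ?thesis by (cases W) auto
  next
    case False
    define c a where "c = butlast W" and "a = last W"
    have W: "W = c @ [a]"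
      using walk_not_Nil[OF less.prems(1)] by (simp add: c_def a_def)
    then have "c \<noteq> []" using False by auto
    then have a: "a = hd c" using less.prems(2) by (simp add: W)
    show ?thesis
    proof (cases "distinct c")
      case True
      then show ?thesis
        using walk_sign_closed_distinct[OF bal] less.prems(1) W a \<open>c \<noteq> []\<close> by simp
    next
      case False
      then obtain xs ys zs u where c: "c = xs @ [u] @ ys @ [u] @ zs"
        using not_distinct_decomp by blast
      \<comment> \<open>cut the closed walk at the repeated vertex u into two shorter closed walks\<close>
      have W': "W = xs @ u # ys @ u # zs @ [a]" by (simp add: W c)
      have "walk V E (xs @ [u])"
        using walk_appendD1[of V E "xs @ [u]" "ys @ [u] @ zs @ [a]"] less.prems(1) W' by simp
      moreover have w2: "walk V E (u # ys @ [u] @ zs @ [a])"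
        using walk_appendD2[of V E xs "u # ys @ [u] @ zs @ [a]"] less.prems(1) W' by simp
      moreover have "walk V E (u # zs @ [a])"
        using walk_appendD2[of V E "u # ys" "u # zs @ [a]"] w2 by simp
      ultimately have "walk V E (xs @ u # zs @ [a])"
        using walk_append_iff[of V E xs u "zs @ [a]"] by blast
      moreover have "walk V E (u # ys @ [u])"
        using walk_appendD1[of V E "u # ys @ [u]" "zs @ [a]"] w2 by simp
      moreover have "hd (xs @ u # zs @ [a]) = last (xs @ u # zs @ [a])"
        using a c by (cases xs) auto
      ultimately have "walk_sign \<sigma> (xs @ u # zs @ [a]) = 1" "walk_sign \<sigma> (u # ys @ [u]) = 1"
        using less.hyps W' by simp_all
      then show ?thesis
        unfolding W' walk_sign_append[of \<sigma> xs u "ys @ u # zs @ [a]"]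
        using walk_sign_append[of \<sigma> "u # ys" u "zs @ [a]"] walk_sign_append[of \<sigma> xs u "zs @ [a]"]
        by simp
    qed
  qed
qed

lemma walk_sign_two_paths:
  assumes bal: "balanced V E \<sigma>" and "walk V E P" "walk V E Q" "hd P = hd Q"
    and edge: "E (last P) (last Q)"
  shows "walk_sign \<sigma> P * walk_sign \<sigma> Q = \<sigma> (last P) (last Q)"
proof -
  obtain P' a where P: "P = P' @ [a]"
    using walk_not_Nil[OF assms(2)] by (cases P rule: rev_cases) auto
  obtain b R where R: "rev Q = b # R"
    using walk_not_Nil[OF assms(3)] by (cases "rev Q") auto
  have Q: "last Q = b" "hd Q = last (b # R)"
    using arg_cong[OF R, of hd] arg_cong[OF R, of last] by (simp_all add: hd_rev last_rev)
  \<comment> \<open>P followed by Q backwards is a closed walk\<close>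
  have "walk V E (b # R)" using walk_rev[OF graph assms(3)] by (simp add: R)
  then have "walk V E (P' @ a # b # R)"
    using assms(2) edge edge_vertices[OF edge] walk_append_iff[of V E P' a "b # R"]
    by (simp add: P Q)
  moreover have "hd (P' @ a # b # R) = last (P' @ a # b # R)"
    using assms(4) by (cases P') (simp_all add: P Q)
  ultimately have "walk_sign \<sigma> (P' @ a # b # R) = 1" by (rule walk_sign_closed[OF bal])
  moreover have "walk_sign \<sigma> (b # R) = walk_sign \<sigma> Q"
    using walk_sign_rev[OF assms(3)] by (simp add: R)
  ultimately have closed: "\<sigma> a b * (walk_sign \<sigma> P * walk_sign \<sigma> Q) = 1"
    using walk_sign_append[of \<sigma> P' a "b # R"] by (simp add: P algebra_simps)
  have "\<sigma> a b * \<sigma> a b = 1" using sign_square edge by (simp add: P Q)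
  then have "walk_sign \<sigma> P * walk_sign \<sigma> Q
      = (\<sigma> a b * \<sigma> a b) * (walk_sign \<sigma> P * walk_sign \<sigma> Q)"
    by simp
  also have "\<dots> = \<sigma> a b * (\<sigma> a b * (walk_sign \<sigma> P * walk_sign \<sigma> Q))"
    by (rule mult.assoc)
  also have "\<dots> = \<sigma> a b" using closed by simp
  finally show ?thesis by (simp add: P Q)
qed

lemma exists_max_vertex:
  fixes f :: "'a \<Rightarrow> 'b::linorder"
  assumes "V \<noteq> {}"
  obtains x where "x \<in> V" "\<And>y. y \<in> V \<Longrightarrow> f y \<le> f x"
proof -
  have "Max (f ` V) \<in> f ` V" using assms finite_vertices by simp
  then obtain x where x: "x \<in> V" "f x = Max (f ` V)" by (metis imageE)
  show ?thesis
  proof (rule that[OF x(1)])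
    fix y assume "y \<in> V"
    then show "f y \<le> f x" using x(2) finite_vertices by simp
  qed
qed

lemma deg_times_slap:
  "real (deg V E x) * slap V E \<sigma>' h x = (\<Sum>y\<in>nbrs V E x. \<sigma>' x y * h y - h x)"
  using finite_nbrs[of x] by (cases "deg V E x = 0") (auto simp: slap_def deg_def)

lemma deg_le_max_deg: "x \<in> V \<Longrightarrow> deg V E x \<le> max_deg V E"
  unfolding max_deg_def using finite_vertices by simp

lemma sum_nbrs_antisym: "(\<Sum>x\<in>V. \<Sum>y\<in>nbrs V E x. a x - a y) = (0::real)"
proof -
  have nbrs_sum: "(\<Sum>y\<in>nbrs V E x. f y) = (\<Sum>y\<in>V. if E x y then f y else 0)"
    for x and f :: "'a \<Rightarrow> real"
    unfolding nbrs_def using finite_vertices by (simp add: sum.inter_filter)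
  have "(\<Sum>x\<in>V. \<Sum>y\<in>nbrs V E x. a y) = (\<Sum>x\<in>V. \<Sum>y\<in>V. if E x y then a y else 0)"
    by (simp add: nbrs_sum)
  also have "\<dots> = (\<Sum>y\<in>V. \<Sum>x\<in>V. if E x y then a y else 0)"
    by (rule sum.swap)
  also have "\<dots> = (\<Sum>y\<in>V. \<Sum>x\<in>V. if E y x then a y else 0)"
    by (intro sum.cong refl) (auto dest: edge_sym)
  also have "\<dots> = (\<Sum>x\<in>V. \<Sum>y\<in>nbrs V E x. a x)"
    by (rule sum.cong[OF refl]) (rule nbrs_sum[symmetric])
  finally show ?thesis by (simp add: sum_subtractf)
qed

lemma lap_nonpos_at_max:
  assumes "\<And>y. y \<in> V \<Longrightarrow> F y \<le> F x"
  shows "lap V E F x \<le> 0"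
proof -
  have "(\<Sum>y\<in>nbrs V E x. F y - F x) \<le> 0" using assms by (intro sum_nonpos) (simp add: nbrs_def)
  then show ?thesis unfolding lap_def slap_def by (simp add: divide_nonpos_nonneg)
qed

lemma sGamma_eq_local_energy:
  "2 * real (deg V E x) * sGamma V E \<sigma> g g x = local_energy V E \<sigma> g x"
proof -
  have "2 * real (deg V E x) * sGamma V E \<sigma> g g x
     = real (deg V E x) * lap V E (\<lambda>z. g z * g z) x - 2 * g x * (real (deg V E x) * slap V E \<sigma> g x)"
    unfolding sGamma_def by (simp add: algebra_simps)
  also have "\<dots> = (\<Sum>y\<in>nbrs V E x. g y * g y - g x * g x)
      - 2 * g x * (\<Sum>y\<in>nbrs V E x. \<sigma> x y * g y - g x)"
    unfolding lap_def deg_times_slap by simp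
  also have "\<dots> = (\<Sum>y\<in>nbrs V E x. g y * g y - g x * g x - 2 * g x * (\<sigma> x y * g y - g x))"
    by (simp only: sum_subtractf[symmetric] sum_distrib_left)
  also have "\<dots> = local_energy V E \<sigma> g x"
    unfolding local_energy_def
  proof (rule sum.cong)
    fix y assume "y \<in> nbrs V E x"
    then have "\<sigma> x y * \<sigma> x y = 1" using sign_square by (simp add: nbrs_def)
    then show "g y * g y - g x * g x - 2 * g x * (\<sigma> x y * g y - g x) = (\<sigma> x y * g y - g x)\<^sup>2"
      by (simp add: power2_eq_square algebra_simps)
  qed simp
  finally show ?thesis .
qed

lemma sGamma_le:
  assumes CD: "CD_inf V E \<sigma> K"
    and eigen: "\<And>x. x \<in> V \<Longrightarrow> slap V E \<sigma> g x = - lam * g x"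
    and bounded: "\<And>x. x \<in> V \<Longrightarrow> \<bar>g x\<bar> \<le> 1"
    and "lam > 0" and gap: "2 * lam - K > 0" and "x \<in> V"
  shows "sGamma V E \<sigma> g g x \<le> 2 * (2 * lam - K)"
proof -
  define c G where "c = 2 * lam - K" and "G = sGamma V E \<sigma> g g"
  define F where "F z = G z + c * (g z * g z)" for z
  have sq_le: "g y * g y \<le> 1" if "y \<in> V" for y
    using bounded[OF that] by (metis abs_le_square_iff abs_one power2_eq_square power_one)
  obtain z where z: "z \<in> V" and max: "\<And>y. y \<in> V \<Longrightarrow> F y \<le> F z"
    using exists_max_vertex[of F] \<open>x \<in> V\<close> by blast
  \<comment> \<open>maximum principle for F, combined with the curvature condition at z\<close>
  have "lap V E F z \<le> 0" using max by (rule lap_nonpos_at_max)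
  moreover have "lap V E F z = lap V E G z + c * lap V E (\<lambda>y. g y * g y) z"
    unfolding F_def lap_def using slap_linear[of V E "\<lambda>_ _. 1" 1 G c "\<lambda>y. g y * g y" z] by simp
  moreover have "lap V E (\<lambda>y. g y * g y) z = 2 * G z - 2 * lam * (g z * g z)"
    unfolding G_def sGamma_def using eigen[OF z] by (simp add: field_simps)
  moreover have "K * G z \<le> lap V E G z / 2 + lam * G z"
    using CD z sGamma2_eigenfun[OF z eigen] unfolding CD_inf_def G_def by metis
  ultimately have "lam * G z \<le> lam * (c * (g z * g z))"
    unfolding c_def by (simp add: algebra_simps)
  then have "G z \<le> c * (g z * g z)" using \<open>lam > 0\<close> by simp
  moreover have "c * (g z * g z) \<le> c" using sq_le[OF z] gap by (simp add: c_def)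
  moreover have "G x \<le> F x" using gap by (simp add: F_def c_def)
  ultimately show ?thesis using max[OF \<open>x \<in> V\<close>] by (simp add: F_def c_def G_def)
qed

lemma local_energy_le:
  assumes CD: "CD_inf V E \<sigma> K"
    and eigen: "\<And>x. x \<in> V \<Longrightarrow> slap V E \<sigma> g x = - lam * g x"
    and bounded: "\<And>x. x \<in> V \<Longrightarrow> \<bar>g x\<bar> \<le> 1"
    and "lam > 0" and gap: "2 * lam - K > 0" and "x \<in> V"
  shows "local_energy V E \<sigma> g x \<le> 4 * real (max_deg V E) * (2 * lam - K)"
proof -
  have "local_energy V E \<sigma> g x = 2 * real (deg V E x) * sGamma V E \<sigma> g g x"
    by (simp add: sGamma_eq_local_energy)
  also have "\<dots> \<le> 2 * real (deg V E x) * (2 * (2 * lam - K))"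
    using sGamma_le[OF assms] by (intro mult_left_mono) auto
  also have "\<dots> \<le> 2 * real (max_deg V E) * (2 * (2 * lam - K))"
    using deg_le_max_deg[OF \<open>x \<in> V\<close>] gap by (intro mult_right_mono) auto
  finally show ?thesis by (simp add: algebra_simps)
qed

lemma edge_term_sym: "E a b \<Longrightarrow> (\<sigma> a b * g b - g a)\<^sup>2 = (\<sigma> b a * g a - g b)\<^sup>2"
  using sign_sym[of a b] sign_cases[of a b] by (auto simp: power2_eq_square algebra_simps)

lemma edge_term_le_local_energy:
  assumes "E x y"
  shows "(\<sigma> x y * g y - g x)\<^sup>2 \<le> local_energy V E \<sigma> g x"
proof -
  have "y \<in> nbrs V E x" using assms edge_vertices by (simp add: nbrs_def)
  then show ?thesis unfolding local_energy_def by (rule member_le_sum) (simp_all add: finite_nbrs)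
qed

lemma two_edge_terms_le_local_energy:
  assumes "E x u" "E x v" "u \<noteq> v"
  shows "(\<sigma> x u * g u - g x)\<^sup>2 + (\<sigma> x v * g v - g x)\<^sup>2 \<le> local_energy V E \<sigma> g x"
proof -
  have "{u, v} \<subseteq> nbrs V E x" using assms edge_vertices by (auto simp: nbrs_def)
  then have "(\<Sum>y\<in>{u, v}. (\<sigma> x y * g y - g x)\<^sup>2) \<le> local_energy V E \<sigma> g x"
    unfolding local_energy_def by (intro sum_mono2 finite_nbrs) auto
  then show ?thesis using assms(3) by simp
qed

lemma switched_increment:
  assumes w: "walk V E W" and k: "Suc k < length W"
  shows "(walk_sign \<sigma> (take (Suc (Suc k)) W) * g (W ! Suc k)
           - walk_sign \<sigma> (take (Suc k) W) * g (W ! k))\<^sup>2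
    = (\<sigma> (W ! k) (W ! Suc k) * g (W ! Suc k) - g (W ! k))\<^sup>2"
proof -
  define p where "p = walk_sign \<sigma> (take k W @ [W ! k])"
  have take_Suc: "take (Suc k) W = take k W @ [W ! k]"
    using k by (simp add: take_Suc_conv_app_nth)
  have "take (Suc (Suc k)) W = take k W @ [W ! k, W ! Suc k]"
    using k take_Suc by (simp add: take_Suc_conv_app_nth)
  then have "walk_sign \<sigma> (take (Suc (Suc k)) W) * g (W ! Suc k)
      - walk_sign \<sigma> (take (Suc k) W) * g (W ! k)
      = p * (\<sigma> (W ! k) (W ! Suc k) * g (W ! Suc k) - g (W ! k))"
    by (simp add: p_def take_Suc walk_sign_snoc algebra_simps)
  moreover have "p * p = 1"
    using walk_sign_square[OF walk_take[OF w, of k]] by (simp add: p_def take_Suc)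
  ultimately show ?thesis by (simp add: power_mult_distrib power2_eq_square[of p])
qed

lemma flipping_walk_energy_bound:
  assumes w: "walk V E W" and nb: "non_backtracking W"
    and start: "g (hd W) = 1" and flips: "walk_sign \<sigma> W * g (last W) \<le> 0"
    and energy: "\<And>x. x \<in> V \<Longrightarrow> local_energy V E \<sigma> g x \<le> M"
  shows "1 \<le> real (length W - 1) * real (length W div 2) * M"
proof -
  define n where "n = length W - 1"
  have len: "length W = Suc n" using walk_not_Nil[OF w] by (simp add: n_def)
  define h where "h k = walk_sign \<sigma> (take (Suc k) W) * g (W ! k)" for k
  have edge: "E (W ! k) (W ! Suc k)" if "k < n" for k
    using w that len by (simp add: walk_def)
  have vertex: "W ! k \<in> V" if "k \<le> n" for k
    using w that len by (auto simp: walk_def)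
  have increment: "(h (Suc k) - h k)\<^sup>2 = (\<sigma> (W ! k) (W ! Suc k) * g (W ! Suc k) - g (W ! k))\<^sup>2"
    if "k < n" for k
    unfolding h_def by (rule switched_increment) (use w that len in simp_all)
  have single: "(h (Suc k) - h k)\<^sup>2 \<le> M" if "k < n" for k
    using increment[OF that] edge_term_le_local_energy[where g = g, OF edge[OF that]]
      energy[OF vertex, of k] that
    by simp
  have pair: "(h (2*k+1) - h (2*k))\<^sup>2 + (h (2*k+2) - h (2*k+1))\<^sup>2 \<le> M" if "2 * k + 2 \<le> n" for k
  proof -
    let ?u = "W ! (2*k)" and ?x = "W ! (2*k+1)" and ?v = "W ! (2*k+2)"
    have "E ?u ?x" "E ?x ?v" using edge[of "2*k"] edge[of "2*k+1"] that by simp_all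
    moreover have "?u \<noteq> ?v" using nb that len by (simp add: non_backtracking_def)
    ultimately have "(\<sigma> ?x ?u * g ?u - g ?x)\<^sup>2 + (\<sigma> ?x ?v * g ?v - g ?x)\<^sup>2 \<le> M"
      using two_edge_terms_le_local_energy[where g = g, of ?x ?u ?v]
        energy[OF vertex, of "2*k+1"] that
      by (simp add: edge_sym)
    then show ?thesis
      using increment[of "2*k"] increment[of "2*k+1"]
        edge_term_sym[where g = g, OF \<open>E ?u ?x\<close>] that
      by (simp add: add.commute)
  qed
  have "h 0 = 1" using start walk_not_Nil[OF w] by (cases W) (simp_all add: h_def)
  moreover have "h n \<le> 0" using flips len walk_not_Nil[OF w] by (simp add: h_def last_conv_nth)
  ultimately have "1 \<le> real n * real ((n + 1) div 2) * M"
    by (rule paired_increments_drop_bound) (use single pair in auto)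
  then show ?thesis by (simp add: len)
qed

end

section \<open>Peak-normalized eigenfunctions\<close>

locale peak_eigenfunction = signed_graph +
  fixes lam :: real and g :: "'a \<Rightarrow> real" and x0 :: 'a
  assumes peak_vertex: "x0 \<in> V" and peak: "g x0 = 1"
    and bounded: "\<And>x. x \<in> V \<Longrightarrow> \<bar>g x\<bar> \<le> 1"
    and eigen: "\<And>x. x \<in> V \<Longrightarrow> slap V E \<sigma> g x = - lam * g x"
    and eigenvalue_nonzero: "lam \<noteq> 0"
begin

lemma deg_peak_pos: "deg V E x0 > 0"
proof (rule ccontr)
  assume "\<not> deg V E x0 > 0"
  then have "slap V E \<sigma> g x0 = 0" by (simp add: slap_def)
  then show False using eigen[OF peak_vertex] peak eigenvalue_nonzero by simp
qed

lemma eigenvalue_pos: "lam > 0"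
proof -
  have "real (deg V E x0) * slap V E \<sigma> g x0 = (\<Sum>y\<in>nbrs V E x0. \<sigma> x0 y * g y - g x0)"
    by (rule deg_times_slap)
  also have "\<dots> \<le> 0"
  proof (rule sum_nonpos)
    fix y assume "y \<in> nbrs V E x0"
    then have "E x0 y" "y \<in> V" by (auto simp: nbrs_def)
    then show "\<sigma> x0 y * g y - g x0 \<le> 0"
      using sign_cases[of x0 y] bounded[of y] peak by (auto simp: abs_le_iff)
  qed
  finally have "0 \<le> real (deg V E x0) * lam" using eigen[OF peak_vertex] peak by simp
  then show ?thesis using deg_peak_pos eigenvalue_nonzero by (simp add: zero_le_mult_iff)
qed

lemma sign_changing_edge: "\<exists>x y. E x y \<and> \<sigma> x y * g x * g y \<le> 0"
proof (rule ccontr)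
  assume "\<not> ?thesis"
  then have same_sign: "\<sigma> x y * g x * g y > 0" if "E x y" for x y
    using that by force
  \<comment> \<open>without sign changes, \<bar>g\<bar> is an eigenfunction of the unsigned Laplacian for lam > 0,
    which contradicts the vanishing of its total sum\<close>
  have local_sum: "real (deg V E x) * lam * \<bar>g x\<bar> = (\<Sum>y\<in>nbrs V E x. \<bar>g x\<bar> - \<bar>g y\<bar>)"
    if "x \<in> V" for x
  proof -
    have "real (deg V E x) * lam * \<bar>g x\<bar> = sgn (g x) * - (real (deg V E x) * slap V E \<sigma> g x)"
      using eigen[OF that] by (simp add: abs_sgn algebra_simps)
    also have "\<dots> = (\<Sum>y\<in>nbrs V E x. sgn (g x) * (g x - \<sigma> x y * g y))"
      by (simp add: deg_times_slap sum_distrib_left sum_negf[symmetric])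
    also have "\<dots> = (\<Sum>y\<in>nbrs V E x. \<bar>g x\<bar> - \<bar>g y\<bar>)"
    proof (rule sum.cong)
      fix y assume "y \<in> nbrs V E x"
      then have "E x y" by (simp add: nbrs_def)
      then show "sgn (g x) * (g x - \<sigma> x y * g y) = \<bar>g x\<bar> - \<bar>g y\<bar>"
        using sign_cases[of x y] same_sign[of x y] by (auto simp: sgn_if abs_if zero_less_mult_iff)
    qed simp
    finally show ?thesis .
  qed
  have "(\<Sum>x\<in>V. real (deg V E x) * lam * \<bar>g x\<bar>)
      = (\<Sum>x\<in>V. \<Sum>y\<in>nbrs V E x. \<bar>g x\<bar> - \<bar>g y\<bar>)"
    by (intro sum.cong) (simp_all add: local_sum)
  also have "\<dots> = 0" by (rule sum_nbrs_antisym)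
  moreover have "real (deg V E x0) * lam * \<bar>g x0\<bar> \<le> (\<Sum>x\<in>V. real (deg V E x) * lam * \<bar>g x\<bar>)"
    using finite_vertices peak_vertex eigenvalue_pos by (intro member_le_sum) auto
  ultimately show False using deg_peak_pos eigenvalue_pos peak by (simp add: mult_le_0_iff)
qed

context
  fixes K :: real
  assumes CD: "CD_inf V E \<sigma> K"
begin

lemma flipping_walk_bound:
  assumes "walk V E W" "hd W = x0" "non_backtracking W" "length W \<le> Suc L"
    and flips: "walk_sign \<sigma> W * g (last W) \<le> 0"
  shows "1 / (4 * real (max_deg V E) * (2 * lam - K)) \<le> real L * real_of_int \<lceil>real L / 2\<rceil>"
proof (cases "2 * lam - K > 0")
  case False
  then have "1 / (4 * real (max_deg V E) * (2 * lam - K)) \<le> 0"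
    by (simp add: divide_le_0_1_iff mult_nonneg_nonpos)
  also have "0 \<le> real L * real_of_int \<lceil>real L / 2\<rceil>" by (simp add: ceiling_half_nat)
  finally show ?thesis .
next
  case True
  define M where "M = 4 * real (max_deg V E) * (2 * lam - K)"
  have "M > 0"
    using deg_le_max_deg[OF peak_vertex] deg_peak_pos True by (simp add: M_def)
  have "1 \<le> real (length W - 1) * real (length W div 2) * M"
    by (rule flipping_walk_energy_bound[where g = g, OF assms(1,3)])
       (use flips in \<open>simp_all add: assms(2) peak M_def
          local_energy_le[OF CD eigen bounded eigenvalue_pos True]\<close>)
  also have "\<dots> \<le> real L * real ((L + 1) div 2) * M"
  proof -
    have "length W - 1 \<le> L" "length W div 2 \<le> (L + 1) div 2"
      using assms(4) by (simp_all add: div_le_mono)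
    then show ?thesis using \<open>M > 0\<close> by (intro mult_right_mono mult_mono) simp_all
  qed
  finally have "1 / M \<le> real L * real ((L + 1) div 2)"
    using \<open>M > 0\<close> by (simp add: divide_le_eq)
  then show ?thesis by (simp add: M_def ceiling_half_nat)
qed

context
  assumes connected: "connected_graph V E"
begin

lemma shortest_walk_from_peak:
  assumes "v \<in> V"
  obtains W where "walk V E W" "hd W = x0" "last W = v" "non_backtracking W"
    "length W = Suc (gdist V E x0 v)" "length W \<le> Suc (diameter V E)"
proof -
  obtain W where W: "walk V E W" "hd W = x0" "last W = v" "length W = Suc (gdist V E x0 v)"
    using shortest_walk_exists[OF connected peak_vertex assms] by blast
  then have "non_backtracking W" using shortest_walk_non_backtracking[OF W(1)] by simp
  then show ?thesis using that W gdist_le_diameter[OF peak_vertex assms] by simp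
qed

lemma diameter_bound_vanishing:
  assumes "v \<in> V" "g v = 0"
  shows "1 / (4 * real (max_deg V E) * (2 * lam - K))
    \<le> real (diameter V E) * real_of_int \<lceil>real (diameter V E) / 2\<rceil>"
proof -
  obtain W where "walk V E W" "hd W = x0" "last W = v" "non_backtracking W"
    "length W \<le> Suc (diameter V E)"
    using shortest_walk_from_peak[OF assms(1)] by blast
  then show ?thesis using flipping_walk_bound assms(2) by simp
qed

lemma diameter_bound_balanced:
  assumes "balanced V E \<sigma>"
  shows "1 / (4 * real (max_deg V E) * (2 * lam - K))
    \<le> real (diameter V E) * real_of_int \<lceil>real (diameter V E) / 2\<rceil>"
proof -
  obtain a b where ab: "E a b" "\<sigma> a b * g a * g b \<le> 0"
    using sign_changing_edge by blast
  obtain P where P: "walk V E P" "hd P = x0" "last P = a" "non_backtracking P"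
    "length P \<le> Suc (diameter V E)"
    using shortest_walk_from_peak edge_vertices[OF ab(1)] by blast
  obtain Q where Q: "walk V E Q" "hd Q = x0" "last Q = b" "non_backtracking Q"
    "length Q \<le> Suc (diameter V E)"
    using shortest_walk_from_peak edge_vertices[OF ab(1)] by blast
  have "walk_sign \<sigma> P * walk_sign \<sigma> Q = \<sigma> a b"
    using walk_sign_two_paths[OF assms P(1) Q(1)] P Q ab(1) by simp
  then have "(walk_sign \<sigma> P * g a) * (walk_sign \<sigma> Q * g b) \<le> 0"
    using ab(2) by (simp add: algebra_simps)
  then have "walk_sign \<sigma> P * g (last P) \<le> 0 \<or> walk_sign \<sigma> Q * g (last Q) \<le> 0"
    using P(3) Q(3) by (auto simp: mult_le_0_iff)
  then show ?thesis using flipping_walk_bound P Q by blast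
qed

lemma diameter_Suc_bound:
  "1 / (4 * real (max_deg V E) * (2 * lam - K))
    \<le> real (diameter V E + 1) * real_of_int \<lceil>real (diameter V E + 1) / 2\<rceil>"
proof -
  obtain a b where ab: "E a b" "\<sigma> a b * g a * g b \<le> 0"
    and closer: "gdist V E x0 a \<le> gdist V E x0 b"
  proof -
    obtain x y where xy: "E x y" "\<sigma> x y * g x * g y \<le> 0"
      using sign_changing_edge by blast
    moreover have "E y x" "\<sigma> y x * g y * g x \<le> 0"
      using xy edge_sym sign_sym[OF xy(1)] by (simp_all add: ac_simps)
    ultimately show ?thesis using that nat_le_linear by blast
  qed
  obtain P where P: "walk V E P" "hd P = x0" "last P = a" "non_backtracking P"
    "length P = Suc (gdist V E x0 a)" "length P \<le> Suc (diameter V E)"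
    using shortest_walk_from_peak edge_vertices[OF ab(1)] by blast
  show ?thesis
  proof (cases "walk_sign \<sigma> P * g a \<le> 0")
    case True
    then show ?thesis
      using flipping_walk_bound[OF P(1,2,4), of "diameter V E + 1"] P(3,6) by simp
  next
    case False
    \<comment> \<open>extend P by the edge ab, which does not backtrack because b is not closer to x0 than a\<close>
    define Q where "Q = P @ [b]"
    have "walk V E Q"
      unfolding Q_def by (rule walk_snoc) (use P(1,3) ab(1) edge_vertices[OF ab(1)] in simp_all)
    moreover have "non_backtracking Q"
      unfolding Q_def
    proof (rule non_backtracking_snoc[OF P(4)])
      assume "2 \<le> length P"
      then have "gdist V E x0 (P ! (length P - 2)) \<le> length P - 2"
        using gdist_le_nth[OF P(1), of "length P - 2"] P(2) by simp
      then show "b \<noteq> P ! (length P - 2)" using closer P(5) \<open>2 \<le> length P\<close> by auto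
    qed
    moreover have "walk_sign \<sigma> Q * g (last Q) \<le> 0"
    proof -
      have "walk_sign \<sigma> Q = walk_sign \<sigma> P * \<sigma> a b"
        using walk_sign_snoc_last[OF walk_not_Nil[OF P(1)]] P(3) by (simp add: Q_def)
      then have "(walk_sign \<sigma> P * g a) * (walk_sign \<sigma> Q * g b)
          = (walk_sign \<sigma> P * walk_sign \<sigma> P) * (\<sigma> a b * g a * g b)"
        by (simp add: algebra_simps)
      also have "\<dots> \<le> 0" using walk_sign_square[OF P(1)] ab(2) by simp
      finally show ?thesis using False by (auto simp: Q_def mult_le_0_iff)
    qed
    moreover have "length Q \<le> Suc (diameter V E + 1)" using P(6) by (simp add: Q_def)
    moreover have "hd Q = x0" using P(2) walk_not_Nil[OF P(1)] by (simp add: Q_def)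
    ultimately show ?thesis using flipping_walk_bound by blast
  qed
qed

end

end

end

lemma (in signed_graph) peak_normalization:
  assumes "eigenfun V E \<sigma> lam f" "lam \<noteq> 0"
  obtains x0 where "peak_eigenfunction V E \<sigma> lam (\<lambda>x. f x / f x0) x0"
proof -
  have "V \<noteq> {}" using assms(1) by (auto simp: eigenfun_def)
  then obtain x0 where x0: "x0 \<in> V" and max: "\<And>x. x \<in> V \<Longrightarrow> \<bar>f x\<bar> \<le> \<bar>f x0\<bar>"
    using exists_max_vertex[of "\<lambda>x. \<bar>f x\<bar>"] by blast
  have "f x0 \<noteq> 0" using assms(1) max by (force simp: eigenfun_def)
  show ?thesis
  proof (intro that peak_eigenfunction.intro peak_eigenfunction_axioms.intro)
    show "signed_graph V E \<sigma>" by (rule signed_graph_axioms)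
    show "slap V E \<sigma> (\<lambda>x. f x / f x0) x = - lam * (f x / f x0)" if "x \<in> V" for x
      using slap_scale[of V E \<sigma> "1 / f x0" f x] assms(1) that
      by (simp add: eigenfun_def minus_equation_iff)
  qed (use x0 max assms(2) \<open>f x0 \<noteq> 0\<close> in \<open>simp_all add: abs_divide\<close>)
qed

theorem corollary3p10:
  fixes V :: "'a set" and E :: "'a \<Rightarrow> 'a \<Rightarrow> bool" and \<sigma> :: "'a \<Rightarrow> 'a \<Rightarrow> real"
    and K lam :: real
  assumes "simple_graph V E" and "connected_graph V E"
    and "is_sign E \<sigma>"
    and "CD_inf V E \<sigma> K"
    and "eigenvalue V E \<sigma> lam" and "lam \<noteq> 0"
    and "\<And>\<mu>. eigenvalue V E \<sigma> \<mu> \<Longrightarrow> \<mu> \<noteq> 0 \<Longrightarrow> lam \<le> \<mu>"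
  shows "real (diameter V E + 1) * real_of_int \<lceil>real (diameter V E + 1) / 2\<rceil>
           \<ge> 1 / (4 * real (max_deg V E) * (2 * lam - K)) \<and>
         ((\<not> simple_eigenvalue V E \<sigma> lam \<or> balanced V E \<sigma>) \<longrightarrow>
         real (diameter V E) * real_of_int \<lceil>real (diameter V E) / 2\<rceil>
           \<ge> 1 / (4 * real (max_deg V E) * (2 * lam - K)))"
proof -
  interpret signed_graph V E \<sigma> using assms(1,3) by unfold_locales
  obtain f where "eigenfun V E \<sigma> lam f" using assms(5) by (auto simp: eigenvalue_def)
  then obtain x0 where "peak_eigenfunction V E \<sigma> lam (\<lambda>x. f x / f x0) x0"
    using peak_normalization assms(6) by blast
  then interpret peak: peak_eigenfunction V E \<sigma> lam "\<lambda>x. f x / f x0" x0 .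
  have "(\<not> simple_eigenvalue V E \<sigma> lam \<or> balanced V E \<sigma>) \<Longrightarrow>
      1 / (4 * real (max_deg V E) * (2 * lam - K))
        \<le> real (diameter V E) * real_of_int \<lceil>real (diameter V E) / 2\<rceil>"
  proof (elim disjE)
    assume "\<not> simple_eigenvalue V E \<sigma> lam"
    then obtain f' v where f': "eigenfun V E \<sigma> lam f'" and v: "v \<in> V" "f' v = 0"
      using eigenfun_vanishing_if_not_simple assms(5) by blast
    obtain x1 where "peak_eigenfunction V E \<sigma> lam (\<lambda>x. f' x / f' x1) x1"
      using peak_normalization[OF f' assms(6)] by blast
    then show ?thesis
      using peak_eigenfunction.diameter_bound_vanishing[OF _ assms(4,2) v(1)] v(2) by simp
  next
    assume "balanced V E \<sigma>"
    then show ?thesis using peak.diameter_bound_balanced assms(4,2) by blast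
  qed
  then show ?thesis using peak.diameter_Suc_bound assms(4,2) by blast
qed

end
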